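(* Let $n\in\mathbb{N}$ and let $k$ be an integer with $0\le k\le n-1$. Then $$|PF_{n+1,k}| = \sum_{i=0}^{n} \binom{n}{i}\, \min\big((i+1)+k,\; n+1\big)\, |PF_{i,k}|\,(n-i+1)^{n-i-1},$$ with the convention $|PF_{0,k}|=1$.
   Context: For $n\in\mathbb{N}=\{1,2,\dots\}$ let $[n]=\{1,\dots,n\}$. A parking preference of length $n$ is a tuple $\alpha=(a_1,\dots,a_n)\in[n]^n$; let $PP_n=[n]^n$. For an integer $k\ge 0$, the $k$-Naples parking rule is as follows. There are $n$ parking spots numbered $1,\dots,n$ from west to east, initially empty, and cars $c_1,\dots,c_n$ arrive in this order; car $c_i$ has preferred spot $a_i$. If spot $a_i$ is empty, $c_i$ parks there. Otherwise $c_i$ checks the spots $a_i-1,a_i-2,\dots,a_i-k$, in this order, skipping any that are $<1$, and parks in the first empty one among them. If all these spots are occupied (or there are none), $c_i$ drives east and parks in the first empty spot with number greater than $a_i$; if there is no such spot, $c_i$ fails to park. $\alpha$ is a $k$-Naples parking function of length $n$ if every car parks. $PF_{n,k}$ denotes the set of $k$-Naples parking functions of length $n$ (defined for every integer $k\ge 0$). For $k=0$ this is the classical parking rule, and $PF_{n,0}=PF_n$ is the set of classical parking functions. *)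

theory Defs
  imports Main
begin

text \<open>Spots a-j with j < a are exactly those >= 1.\<close>
definition park_step :: "nat \<Rightarrow> nat \<Rightarrow> nat set \<Rightarrow> nat \<Rightarrow> nat option" where
  "park_step k n occ a =
    (if a \<notin> occ then Some a
     else if (\<exists>j. 1 \<le> j \<and> j \<le> k \<and> j < a \<and> a - j \<notin> occ)
       then Some (a - (LEAST j. 1 \<le> j \<and> j \<le> k \<and> j < a \<and> a - j \<notin> occ))
     else if (\<exists>s. a < s \<and> s \<le> n \<and> s \<notin> occ)
       then Some (LEAST s. a < s \<and> s \<le> n \<and> s \<notin> occ)
     else None)"

fun parks :: "nat \<Rightarrow> nat \<Rightarrow> nat set \<Rightarrow> nat list \<Rightarrow> bool" where
  "parks k n occ [] = True"
| "parks k n occ (a # as) =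
     (case park_step k n occ a of
        None \<Rightarrow> False
      | Some s \<Rightarrow> parks k n (insert s occ) as)"

definition PF :: "nat \<Rightarrow> nat \<Rightarrow> nat list set" where
  "PF n k = {\<alpha>. length \<alpha> = n \<and> set \<alpha> \<subseteq> {1..n} \<and> parks k n {} \<alpha>}"

end

theory Submission
  imports Defs
begin

text \<open>Split a k-Naples parking function of length n + 1 into its first n cars and the last one.
  The first n cars leave exactly one spot e empty, and the last car parks if and only if its
  preference is at most e + k, which leaves min (e + k) (n + 1) choices. No car crosses the empty
  spot: the cars preferring spots left of e form a k-Naples parking function of length e - 1, the
  cars preferring spots right of e park there without ever reaching e, and the two groups
  interleave in n choose (e - 1) ways. The right-hand lists are counted by Pollak's circle
  argument: with e glued in as an extra spot, the n + 1 - e cars park on a circle of n + 2 - e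
  spots, rotating all preferences rotates the empty spot, and so exactly a fraction
  1 / (n + 2 - e) of all (n + 2 - e) ^ (n + 1 - e) lists leaves e empty.\<close>

section \<open>The parking rule\<close>

lemma park_step_free: "a \<notin> occ \<Longrightarrow> park_step k n occ a = Some a"
  by (simp add: park_step_def)

lemma park_step_back:
  assumes "a \<in> occ" "1 \<le> j0" "j0 \<le> k" "j0 < a" "a - j0 \<notin> occ"
    and "\<And>j. 1 \<le> j \<Longrightarrow> j < j0 \<Longrightarrow> a - j \<in> occ"
  shows "park_step k n occ a = Some (a - j0)"
proof -
  have "(LEAST j. 1 \<le> j \<and> j \<le> k \<and> j < a \<and> a - j \<notin> occ) = j0"
    by (rule Least_equality) (use assms in \<open>auto intro: leI\<close>)
  then show ?thesis
    unfolding park_step_def using assms by auto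
qed

lemma park_step_forward:
  assumes "a \<in> occ" "\<And>j. 1 \<le> j \<Longrightarrow> j \<le> k \<Longrightarrow> j < a \<Longrightarrow> a - j \<in> occ"
    and "a < s" "s \<le> n" "s \<notin> occ" "\<And>s'. a < s' \<Longrightarrow> s' < s \<Longrightarrow> s' \<in> occ"
  shows "park_step k n occ a = Some s"
proof -
  have "(LEAST s'. a < s' \<and> s' \<le> n \<and> s' \<notin> occ) = s"
    by (rule Least_equality) (use assms in \<open>auto intro: leI\<close>)
  moreover have "\<not> (\<exists>j. 1 \<le> j \<and> j \<le> k \<and> j < a \<and> a - j \<notin> occ)"
    using assms(2) by blast
  ultimately show ?thesis
    unfolding park_step_def using assms(1,3-5) by auto
qed

lemma park_step_fail:
  assumes "a \<in> occ" "\<And>j. 1 \<le> j \<Longrightarrow> j \<le> k \<Longrightarrow> j < a \<Longrightarrow> a - j \<in> occ"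
    and "\<And>s'. a < s' \<Longrightarrow> s' \<le> n \<Longrightarrow> s' \<in> occ"
  shows "park_step k n occ a = None"
  unfolding park_step_def using assms by auto

lemma park_step_cases:
  obtains (free) "a \<notin> occ" "park_step k n occ a = Some a"
  | (backward) j0 where "a \<in> occ" "1 \<le> j0" "j0 \<le> k" "j0 < a" "a - j0 \<notin> occ"
      "\<And>j. 1 \<le> j \<Longrightarrow> j < j0 \<Longrightarrow> a - j \<in> occ" "park_step k n occ a = Some (a - j0)"
  | (forward) s where "a \<in> occ" "\<And>j. 1 \<le> j \<Longrightarrow> j \<le> k \<Longrightarrow> j < a \<Longrightarrow> a - j \<in> occ"
      "a < s" "s \<le> n" "s \<notin> occ" "\<And>s'. a < s' \<Longrightarrow> s' < s \<Longrightarrow> s' \<in> occ"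
      "park_step k n occ a = Some s"
  | (fail) "a \<in> occ" "\<And>j. 1 \<le> j \<Longrightarrow> j \<le> k \<Longrightarrow> j < a \<Longrightarrow> a - j \<in> occ"
      "\<And>s'. a < s' \<Longrightarrow> s' \<le> n \<Longrightarrow> s' \<in> occ" "park_step k n occ a = None"
proof (cases "a \<in> occ")
  case False
  show thesis by (rule free[OF False park_step_free[OF False]])
next
  case occ: True
  show thesis
  proof (cases "\<exists>j. 1 \<le> j \<and> j \<le> k \<and> j < a \<and> a - j \<notin> occ")
    case True
    define j0 where "j0 = (LEAST j. 1 \<le> j \<and> j \<le> k \<and> j < a \<and> a - j \<notin> occ)"
    have "1 \<le> j0 \<and> j0 \<le> k \<and> j0 < a \<and> a - j0 \<notin> occ"
      unfolding j0_def by (rule LeastI_ex) (rule True)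
    then have j0: "1 \<le> j0" "j0 \<le> k" "j0 < a" "a - j0 \<notin> occ" by auto
    have below: "a - j \<in> occ" if "1 \<le> j" "j < j0" for j
      using not_less_Least[of j "\<lambda>j. 1 \<le> j \<and> j \<le> k \<and> j < a \<and> a - j \<notin> occ"] that j0
      unfolding j0_def[symmetric] by auto
    show thesis by (rule backward[OF occ j0 below park_step_back[OF occ j0 below]])
  next
    case False
    then have no_back: "\<And>j. 1 \<le> j \<Longrightarrow> j \<le> k \<Longrightarrow> j < a \<Longrightarrow> a - j \<in> occ" by blast
    show thesis
    proof (cases "\<exists>s. a < s \<and> s \<le> n \<and> s \<notin> occ")
      case True
      define s where "s = (LEAST s. a < s \<and> s \<le> n \<and> s \<notin> occ)"
      have "a < s \<and> s \<le> n \<and> s \<notin> occ"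
        unfolding s_def by (rule LeastI_ex) (rule True)
      then have s: "a < s" "s \<le> n" "s \<notin> occ" by auto
      have below: "s' \<in> occ" if "a < s'" "s' < s" for s'
        using not_less_Least[of s' "\<lambda>s. a < s \<and> s \<le> n \<and> s \<notin> occ"] that s
        unfolding s_def[symmetric] by auto
      show thesis
        by (rule forward[OF occ no_back s below park_step_forward[OF occ no_back s below]])
    next
      case False
      then have none: "\<And>s'. a < s' \<Longrightarrow> s' \<le> n \<Longrightarrow> s' \<in> occ" by blast
      show thesis by (rule fail[OF occ no_back none park_step_fail[OF occ no_back none]])
    qed
  qed
qed

lemma park_step_not_occupied: "park_step k n occ a = Some s \<Longrightarrow> s \<notin> occ"
  by (cases rule: park_step_cases[of a occ k n]) auto

lemma park_step_in_range:
  "park_step k n occ a = Some s \<Longrightarrow> 1 \<le> a \<Longrightarrow> a \<le> n \<Longrightarrow> 1 \<le> s \<and> s \<le> n"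
  by (cases rule: park_step_cases[of a occ k n]) auto

lemma park_step_ge_empty_spot:
  assumes "e \<notin> occ" "e < a" "park_step k n occ a = Some s"
  shows "e \<le> s"
proof (cases rule: park_step_cases[of a occ k n])
  case (backward j0)
  have "e \<le> a - j0"
  proof (rule ccontr)
    assume "\<not> e \<le> a - j0"
    then have "a - (a - e) \<in> occ" using backward(6)[of "a - e"] assms(2) by auto
    then show False using assms(1,2) by simp
  qed
  then show ?thesis using backward assms(3) by simp
qed (use assms in auto)

fun occupied :: "nat \<Rightarrow> nat \<Rightarrow> nat set \<Rightarrow> nat list \<Rightarrow> nat set option" where
  "occupied k n occ [] = Some occ"
| "occupied k n occ (a # as) =
     (case park_step k n occ a of None \<Rightarrow> None | Some s \<Rightarrow> occupied k n (insert s occ) as)"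

lemma parks_iff_occupied: "parks k n occ xs \<longleftrightarrow> occupied k n occ xs \<noteq> None"
  by (induction xs arbitrary: occ) (auto split: option.splits)

lemma occupied_mono: "occupied k n occ xs = Some F \<Longrightarrow> occ \<subseteq> F"
  by (induction xs arbitrary: occ) (fastforce split: option.splits)+

lemma preferences_occupied: "occupied k n occ xs = Some F \<Longrightarrow> set xs \<subseteq> F"
proof (induction xs arbitrary: occ)
  case (Cons a xs)
  then obtain s where s: "park_step k n occ a = Some s"
    and rest: "occupied k n (insert s occ) xs = Some F"
    by (auto split: option.splits)
  have "a \<in> insert s occ" using s park_step_free[of a occ k n] by (cases "a \<in> occ") auto
  then show ?case using Cons.IH[OF rest] occupied_mono[OF rest] by auto
qed simp

lemma occupied_card:
  "finite occ \<Longrightarrow> occupied k n occ xs = Some F \<Longrightarrow> finite F \<and> card F = card occ + length xs"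
proof (induction xs arbitrary: occ)
  case (Cons a xs)
  then obtain s where s: "park_step k n occ a = Some s"
    and rest: "occupied k n (insert s occ) xs = Some F"
    by (auto split: option.splits)
  show ?case using Cons.IH[OF _ rest] Cons.prems park_step_not_occupied[OF s] by simp
qed simp

lemma occupied_range:
  "occupied k n occ xs = Some F \<Longrightarrow> set xs \<subseteq> {1..n} \<Longrightarrow> F \<subseteq> occ \<union> {1..n}"
proof (induction xs arbitrary: occ)
  case (Cons a xs)
  then obtain s where s: "park_step k n occ a = Some s"
    and rest: "occupied k n (insert s occ) xs = Some F"
    by (auto split: option.splits)
  show ?case using park_step_in_range[OF s] Cons.IH[OF rest] Cons.prems by auto
qed simp

lemma occupied_snoc:
  "occupied k n occ (xs @ [p]) =
    (case occupied k n occ xs of None \<Rightarrow> None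
     | Some F \<Rightarrow> map_option (\<lambda>s. insert s F) (park_step k n F p))"
  by (induction xs arbitrary: occ) (auto split: option.splits)

lemma occupied_all_but_one:
  assumes "occupied k n {} xs = Some F" "set xs \<subseteq> {1..n}" "length xs = n - 1"
    and "e \<in> {1..n}" "e \<notin> F"
  shows "F = {1..n} - {e}"
proof -
  have "F \<subseteq> {1..n} - {e}" "card F = n - 1"
    using occupied_range[OF assms(1,2)] occupied_card[OF _ assms(1)] assms(3,5) by auto
  then show ?thesis
    using card_subset_eq[of "{1..n} - {e}" F] assms(4) by simp
qed

lemma park_step_one_empty_spot:
  assumes "e \<in> {1..n}" "p \<in> {1..n}"
  shows "park_step k n ({1..n} - {e}) p \<noteq> None \<longleftrightarrow> p \<le> e + k"
proof (cases rule: park_step_cases[of p "{1..n} - {e}" k n])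
  case (backward j0)
  then show ?thesis using assms by auto
next
  case (forward s)
  then have "p < e" using assms by auto
  then show ?thesis using forward(7) by simp
next
  case fail
  have "e < p" using fail(3)[of e] fail(1) assms by force
  have "\<not> p \<le> e + k"
  proof
    assume "p \<le> e + k"
    then have "1 \<le> p - e" "p - e \<le> k" "p - e < p" using \<open>e < p\<close> assms(1) by auto
    from fail(2)[OF this] show False using \<open>e < p\<close> by simp
  qed
  then show ?thesis using fail(4) by simp
qed (use assms in auto)

section \<open>Splitting at an empty spot\<close>

text \<open>Left of an empty spot e a car behaves as in the lot 1..e-1, except that where it would
  fail there it parks in e.\<close>
lemma park_step_left_of_empty_spot:
  assumes L: "L \<subseteq> {..<e}" and R: "R \<subseteq> {e<..}" and a: "1 \<le> a" "a < e" and "e \<le> n"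
  shows "park_step k n (L \<union> R) a = Some s \<and> s \<noteq> e \<longleftrightarrow> park_step k (e - 1) L a = Some s"
proof (cases rule: park_step_cases[of a L k "e - 1"])
  case free
  then have "a \<notin> L \<union> R" using R a by auto
  then show ?thesis using park_step_free free a by auto
next
  case (backward j0)
  have "park_step k n (L \<union> R) a = Some (a - j0)"
    by (rule park_step_back) (use backward R a in auto)
  then show ?thesis using backward a by auto
next
  case (forward s')
  have "park_step k n (L \<union> R) a = Some s'"
    by (rule park_step_forward) (use forward R a \<open>e \<le> n\<close> in auto)
  then show ?thesis using forward a by auto
next
  case fail
  have "park_step k n (L \<union> R) a = Some e"
    by (rule park_step_forward) (use fail L R a \<open>e \<le> n\<close> in auto)
  then show ?thesis using fail by auto
qed

lemma park_step_right_of_empty_spot: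
  assumes L: "L \<subseteq> {..<e}" and "e \<notin> R" "e < a"
  shows "park_step k n (L \<union> R) a = park_step k n R a"
proof (cases rule: park_step_cases[of a R k n])
  case free
  then have "a \<notin> L \<union> R" using L assms by auto
  then show ?thesis using park_step_free free by metis
next
  case (backward j0)
  have "e \<le> a - j0"
  proof (rule ccontr)
    assume "\<not> e \<le> a - j0"
    then have "1 \<le> a - e" "a - e < j0" using assms by auto
    from backward(6)[OF this] show False using assms by simp
  qed
  then have "park_step k n (L \<union> R) a = Some (a - j0)"
    by (intro park_step_back) (use backward L in auto)
  then show ?thesis using backward by simp
next
  case (forward s)
  have "park_step k n (L \<union> R) a = Some s"
    by (rule park_step_forward) (use forward L assms in auto)
  then show ?thesis using forward by simp
next
  case fail
  have "park_step k n (L \<union> R) a = None"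
    by (rule park_step_fail) (use fail in auto)
  then show ?thesis using fail by simp
qed

definition parks_avoiding :: "nat \<Rightarrow> nat \<Rightarrow> nat \<Rightarrow> nat set \<Rightarrow> nat list \<Rightarrow> bool" where
  "parks_avoiding k n e occ xs \<longleftrightarrow> (\<exists>F. occupied k n occ xs = Some F \<and> e \<notin> F)"

lemma parks_avoiding_Nil [simp]: "parks_avoiding k n e occ [] \<longleftrightarrow> e \<notin> occ"
  by (simp add: parks_avoiding_def)

lemma parks_avoiding_Cons:
  "parks_avoiding k n e occ (a # xs) \<longleftrightarrow>
    (\<exists>s. park_step k n occ a = Some s \<and> s \<noteq> e \<and> parks_avoiding k n e (insert s occ) xs)"
proof (cases "park_step k n occ a")
  case (Some s)
  then show ?thesis
    unfolding parks_avoiding_def using occupied_mono[of k n "insert s occ" xs] by auto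
qed (simp add: parks_avoiding_def)

lemma parks_avoiding_split:
  assumes "L \<subseteq> {..<e}" "R \<subseteq> {e<..}" "set xs \<subseteq> {1..n} - {e}" "e \<le> n"
  shows "parks_avoiding k n e (L \<union> R) xs \<longleftrightarrow>
    occupied k (e - 1) L (filter (\<lambda>x. x < e) xs) \<noteq> None \<and>
    parks_avoiding k n e R (filter (\<lambda>x. \<not> x < e) xs)"
  using assms
proof (induction xs arbitrary: L R)
  case (Cons a xs)
  let ?left = "filter (\<lambda>x. x < e) xs" and ?right = "filter (\<lambda>x. \<not> x < e) xs"
  have a: "1 \<le> a" "a \<le> n" "a \<noteq> e" and xs: "set xs \<subseteq> {1..n} - {e}"
    using Cons.prems by auto
  show ?case
  proof (cases "a < e")
    case True
    have "parks_avoiding k n e (L \<union> R) (a # xs) \<longleftrightarrow>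
        (\<exists>s. park_step k (e - 1) L a = Some s \<and> parks_avoiding k n e (insert s L \<union> R) xs)"
      unfolding parks_avoiding_Cons
      using park_step_left_of_empty_spot[OF Cons.prems(1,2) a(1) True Cons.prems(4)] by auto
    also have "\<dots> \<longleftrightarrow> (\<exists>s. park_step k (e - 1) L a = Some s \<and>
        occupied k (e - 1) (insert s L) ?left \<noteq> None \<and> parks_avoiding k n e R ?right)"
    proof (rule ex_cong1)
      fix s
      show "park_step k (e - 1) L a = Some s \<and> parks_avoiding k n e (insert s L \<union> R) xs \<longleftrightarrow>
          park_step k (e - 1) L a = Some s \<and>
          occupied k (e - 1) (insert s L) ?left \<noteq> None \<and> parks_avoiding k n e R ?right"
      proof (cases "park_step k (e - 1) L a = Some s")
        case step: True
        have "s \<le> e - 1" using park_step_in_range[OF step a(1)] True by simp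
        then have "insert s L \<subseteq> {..<e}" using True Cons.prems(1) by auto
        from Cons.IH[OF this Cons.prems(2) xs Cons.prems(4)] step show ?thesis
          by (simp del: Un_insert_left)
      qed simp
    qed
    finally show ?thesis using True by (auto split: option.split)
  next
    case False
    then have "e < a" using a by simp
    have e_R: "e \<notin> R" using Cons.prems(2) by auto
    have "parks_avoiding k n e (L \<union> R) (a # xs) \<longleftrightarrow>
        (\<exists>s. park_step k n R a = Some s \<and> s \<noteq> e \<and> parks_avoiding k n e (L \<union> insert s R) xs)"
      unfolding parks_avoiding_Cons park_step_right_of_empty_spot[OF Cons.prems(1) e_R \<open>e < a\<close>]
      by auto
    also have "\<dots> \<longleftrightarrow> (\<exists>s. park_step k n R a = Some s \<and> s \<noteq> e \<and>
        occupied k (e - 1) L ?left \<noteq> None \<and> parks_avoiding k n e (insert s R) ?right)"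
    proof (rule ex_cong1)
      fix s
      show "park_step k n R a = Some s \<and> s \<noteq> e \<and> parks_avoiding k n e (L \<union> insert s R) xs \<longleftrightarrow>
          park_step k n R a = Some s \<and> s \<noteq> e \<and>
          occupied k (e - 1) L ?left \<noteq> None \<and> parks_avoiding k n e (insert s R) ?right"
      proof (cases "park_step k n R a = Some s \<and> s \<noteq> e")
        case step: True
        then have "insert s R \<subseteq> {e<..}"
          using park_step_ge_empty_spot[OF e_R \<open>e < a\<close>] Cons.prems(2) by fastforce
        from Cons.IH[OF Cons.prems(1) this xs Cons.prems(4)] step show ?thesis
          by (simp del: Un_insert_right)
      qed auto
    qed
    finally show ?thesis using \<open>e < a\<close> by (auto simp: parks_avoiding_Cons)
  qed
qed (auto simp: parks_avoiding_def)

section \<open>Parking on a circle\<close>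

text \<open>On a circle of M spots 0, ..., M-1, for a car preferring p, f j says whether the spot at
  offset j from p is occupied, and circ_offset k f is the offset at which the car parks under
  the k-Naples rule; the forward search wraps around the circle, so it succeeds whenever some
  spot is free.\<close>
definition circ_offset :: "nat \<Rightarrow> (int \<Rightarrow> bool) \<Rightarrow> int" where
  "circ_offset k f = (if \<not> f 0 then 0
     else if \<exists>j::nat. 1 \<le> j \<and> j \<le> k \<and> \<not> f (- int j)
       then - int (LEAST j::nat. 1 \<le> j \<and> j \<le> k \<and> \<not> f (- int j))
     else int (LEAST j::nat. 1 \<le> j \<and> \<not> f (int j)))"

definition circ_step :: "nat \<Rightarrow> int \<Rightarrow> int set \<Rightarrow> int \<Rightarrow> int" where
  "circ_step k M occ p = (p + circ_offset k (\<lambda>j. (p + j) mod M \<in> occ)) mod M"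

fun circ_occupied :: "nat \<Rightarrow> int \<Rightarrow> int set \<Rightarrow> int list \<Rightarrow> int set" where
  "circ_occupied k M occ [] = occ"
| "circ_occupied k M occ (p # ps) = circ_occupied k M (insert (circ_step k M occ p) occ) ps"

definition circ_shift :: "int \<Rightarrow> int \<Rightarrow> int set \<Rightarrow> int set" where
  "circ_shift M t A = {y. 0 \<le> y \<and> y < M \<and> (y - t) mod M \<in> A}"

lemma circ_step_range: "M > 0 \<Longrightarrow> 0 \<le> circ_step k M occ p \<and> circ_step k M occ p < M"
  unfolding circ_step_def by simp

lemma circ_step_shift:
  assumes "M > 0"
  shows "circ_step k M (circ_shift M t occ) ((p + t) mod M) = (circ_step k M occ p + t) mod M"
proof -
  have "(\<lambda>j. ((p + t) mod M + j) mod M \<in> circ_shift M t occ) = (\<lambda>j. (p + j) mod M \<in> occ)"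
  proof
    fix j
    have "(((p + t) mod M + j) mod M - t) mod M = (p + j) mod M"
      by (metis add.commute add_diff_cancel_left' mod_add_left_eq mod_diff_left_eq add.left_commute)
    then show "(((p + t) mod M + j) mod M \<in> circ_shift M t occ) = ((p + j) mod M \<in> occ)"
      using assms unfolding circ_shift_def by simp
  qed
  then show ?thesis unfolding circ_step_def
    by (simp add: mod_add_left_eq algebra_simps) (metis mod_add_left_eq add.commute add.left_commute)
qed

lemma circ_shift_insert:
  assumes "M > 0" "0 \<le> x" "x < M"
  shows "circ_shift M t (insert x A) = insert ((x + t) mod M) (circ_shift M t A)"
proof -
  have "(y - t) mod M = x \<longleftrightarrow> y = (x + t) mod M" if "0 \<le> y" "y < M" for y
  proof
    assume "(y - t) mod M = x"
    then have "(x + t) mod M = ((y - t) mod M + t) mod M" by simp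
    also have "\<dots> = y" using that by (simp add: mod_add_left_eq)
    finally show "y = (x + t) mod M" by simp
  next
    assume "y = (x + t) mod M"
    then have "(y - t) mod M = ((x + t) mod M - t) mod M" by simp
    also have "\<dots> = x" using assms by (simp add: mod_diff_left_eq)
    finally show "(y - t) mod M = x" .
  qed
  then show ?thesis
    unfolding circ_shift_def using assms by auto
qed

lemma circ_occupied_shift:
  assumes "M > 0"
  shows "circ_occupied k M (circ_shift M t occ) (map (\<lambda>p. (p + t) mod M) ps) =
    circ_shift M t (circ_occupied k M occ ps)"
proof (induction ps arbitrary: occ)
  case (Cons p ps)
  have "insert (circ_step k M (circ_shift M t occ) ((p + t) mod M)) (circ_shift M t occ) =
      circ_shift M t (insert (circ_step k M occ p) occ)"
    using circ_shift_insert[OF assms] circ_step_range[OF assms] circ_step_shift[OF assms] by simp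
  then show ?case using Cons by simp
qed simp

lemma circ_offset_cases:
  obtains (free) "\<not> f 0" "circ_offset k f = 0"
  | (backward) j0 where "f 0" "1 \<le> j0" "j0 \<le> k" "\<not> f (- int j0)"
      "\<And>j. 1 \<le> j \<Longrightarrow> j < j0 \<Longrightarrow> f (- int j)" "circ_offset k f = - int j0"
  | (forward) "f 0" "\<And>j. 1 \<le> j \<Longrightarrow> j \<le> k \<Longrightarrow> f (- int j)"
      "circ_offset k f = int (LEAST j::nat. 1 \<le> j \<and> \<not> f (int j))"
proof (cases "f 0")
  case False
  then show ?thesis using free unfolding circ_offset_def by simp
next
  case occ: True
  show ?thesis
  proof (cases "\<exists>j::nat. 1 \<le> j \<and> j \<le> k \<and> \<not> f (- int j)")
    case True
    define j0 where "j0 = (LEAST j::nat. 1 \<le> j \<and> j \<le> k \<and> \<not> f (- int j))"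
    have j0: "1 \<le> j0 \<and> j0 \<le> k \<and> \<not> f (- int j0)"
      unfolding j0_def by (rule LeastI_ex) (rule True)
    have "f (- int j)" if "1 \<le> j" "j < j0" for j
      using not_less_Least[of j "\<lambda>j. 1 \<le> j \<and> j \<le> k \<and> \<not> f (- int j)"] that j0
      unfolding j0_def[symmetric] by auto
    moreover have "circ_offset k f = - int j0"
      unfolding circ_offset_def j0_def using occ True by simp
    ultimately show ?thesis using backward[of j0] j0 occ by blast
  next
    case False
    then have "circ_offset k f = int (LEAST j::nat. 1 \<le> j \<and> \<not> f (int j))"
      unfolding circ_offset_def using occ by auto
    then show ?thesis using forward occ False by blast
  qed
qed

lemma Least_unoccupied:
  assumes "1 \<le> c" "\<not> f (int c)"
  defines "l \<equiv> LEAST j::nat. 1 \<le> j \<and> \<not> f (int j)"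
  shows "1 \<le> l" "\<not> f (int l)" "l \<le> c" "\<And>j. 1 \<le> j \<Longrightarrow> j < l \<Longrightarrow> f (int j)"
proof -
  have "\<exists>j::nat. 1 \<le> j \<and> \<not> f (int j)" using assms by blast
  from LeastI_ex[OF this] show "1 \<le> l" "\<not> f (int l)" unfolding l_def by auto
  show "l \<le> c" unfolding l_def by (rule Least_le) (use assms in simp)
  show "f (int j)" if "1 \<le> j" "j < l" for j
    using not_less_Least[of j "\<lambda>j::nat. 1 \<le> j \<and> \<not> f (int j)"] that unfolding l_def by auto
qed

lemma circ_step_not_occupied:
  assumes M: "M > 0" and x: "0 \<le> x" "x < M" "x \<notin> occ" and p: "0 \<le> p" "p < M"
  shows "circ_step k M occ p \<notin> occ"
proof -
  define f where "f = (\<lambda>j. (p + j) mod M \<in> occ)"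
  have step: "circ_step k M occ p = (p + circ_offset k f) mod M"
    unfolding circ_step_def f_def by simp
  show ?thesis
  proof (cases rule: circ_offset_cases[of f k])
    case free
    then show ?thesis using step p unfolding f_def by simp
  next
    case (backward j0)
    then show ?thesis using step unfolding f_def by simp
  next
    case forward
    \<comment> \<open>the free spot x lies at the positive offset c from p\<close>
    define c where "c = nat ((x - p) mod M) + nat M"
    have "(p + int c) mod M = ((p + (x - p) mod M) + M) mod M"
      unfolding c_def using M by (simp add: algebra_simps)
    also have "\<dots> = x" using x by (simp add: mod_add_right_eq)
    finally have "\<not> f (int c)" unfolding f_def using x by simp
    moreover have "1 \<le> c" using M unfolding c_def by simp
    ultimately show ?thesis
      using Least_unoccupied(2)[of c f] forward step unfolding f_def by simp
  qed
qed

lemma circ_step_free: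
  assumes "M > 0" "0 \<le> p" "p < M" "p \<notin> occ"
  shows "circ_step k M occ p = p"
  using assms unfolding circ_step_def circ_offset_def by simp

lemma circ_occupied_mono: "occ \<subseteq> circ_occupied k M occ ps"
  by (induction ps arbitrary: occ) (auto, blast)

lemma preferences_circ_occupied:
  assumes "M > 0" "set ps \<subseteq> {0..<M}"
  shows "set ps \<subseteq> circ_occupied k M occ ps"
  using assms(2)
proof (induction ps arbitrary: occ)
  case (Cons p ps)
  have "p \<in> insert (circ_step k M occ p) occ"
    using circ_step_free[OF assms(1), of p occ k] Cons.prems by (cases "p \<in> occ") auto
  then show ?case
    using Cons circ_occupied_mono[of "insert (circ_step k M occ p) occ" k M ps] by auto
qed simp

lemma circ_occupied_card:
  assumes "M > 0" "finite occ" "occ \<subseteq> {0..<M}" "set ps \<subseteq> {0..<M}" "card occ + length ps \<le> nat M"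
  shows "circ_occupied k M occ ps \<subseteq> {0..<M} \<and> finite (circ_occupied k M occ ps) \<and>
    card (circ_occupied k M occ ps) = card occ + length ps"
  using assms(2-5)
proof (induction ps arbitrary: occ)
  case (Cons p ps)
  have "card occ < card {0..<M}" using Cons.prems(4) assms(1) by simp
  then have "\<not> {0..<M} \<subseteq> occ" using card_mono[OF Cons.prems(1)] by (meson not_le)
  then obtain x where "x \<in> {0..<M}" "x \<notin> occ" by blast
  then have x: "0 \<le> x" "x < M" "x \<notin> occ" by auto
  have p: "0 \<le> p" "p < M" using Cons.prems(3) by auto
  have new: "circ_step k M occ p \<notin> occ" by (rule circ_step_not_occupied[OF assms(1) x p])
  have "circ_occupied k M (insert (circ_step k M occ p) occ) ps \<subseteq> {0..<M} \<and>
      finite (circ_occupied k M (insert (circ_step k M occ p) occ) ps) \<and>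
      card (circ_occupied k M (insert (circ_step k M occ p) occ) ps) =
      card (insert (circ_step k M occ p) occ) + length ps"
    by (rule Cons.IH) (use Cons.prems new circ_step_range[OF assms(1)] in auto)
  then show ?case using new Cons.prems(1) by simp
qed simp

definition circ_avoiding :: "nat \<Rightarrow> nat \<Rightarrow> int \<Rightarrow> int list set" where
  "circ_avoiding k m t =
    {ps. length ps = m \<and> set ps \<subseteq> {0..<int m + 1} \<and> t \<notin> circ_occupied k (int m + 1) {} ps}"

lemma card_circ_avoiding_shift:
  assumes "0 \<le> t" "t < int m + 1"
  shows "card (circ_avoiding k m t) = card (circ_avoiding k m 0)"
proof -
  let ?M = "int m + 1"
  let ?shift = "map (\<lambda>p. (p + t) mod ?M)" and ?unshift = "map (\<lambda>q. (q - t) mod ?M)"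
  have M: "?M > 0" by simp
  have mod_M: "x mod ?M \<le> int m" for x using pos_mod_bound[OF M, of x] by simp
  have avoid_shift: "t \<notin> circ_occupied k ?M {} (?shift ps) \<longleftrightarrow> 0 \<notin> circ_occupied k ?M {} ps" for ps
    using circ_occupied_shift[OF M, of k t "{}" ps] assms by (simp add: circ_shift_def)
  have "bij_betw ?shift (circ_avoiding k m 0) (circ_avoiding k m t)"
  proof (rule bij_betw_byWitness[where f' = ?unshift])
    show "\<forall>ps\<in>circ_avoiding k m 0. ?unshift (?shift ps) = ps"
      by (auto simp: circ_avoiding_def mod_diff_left_eq intro!: map_idI)
    show "\<forall>qs\<in>circ_avoiding k m t. ?shift (?unshift qs) = qs"
      by (auto simp: circ_avoiding_def mod_add_left_eq intro!: map_idI)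
    show "?shift ` circ_avoiding k m 0 \<subseteq> circ_avoiding k m t"
      using avoid_shift mod_M by (auto simp: circ_avoiding_def)
    show "?unshift ` circ_avoiding k m t \<subseteq> circ_avoiding k m 0"
    proof
      fix ps assume "ps \<in> ?unshift ` circ_avoiding k m t"
      then obtain qs where qs: "qs \<in> circ_avoiding k m t" and ps: "ps = ?unshift qs" by blast
      have "?shift ps = qs"
        using qs unfolding ps by (auto simp: circ_avoiding_def mod_add_left_eq intro!: map_idI)
      then show "ps \<in> circ_avoiding k m 0"
        using qs avoid_shift[of ps] mod_M unfolding ps by (auto simp: circ_avoiding_def)
    qed
  qed
  then show ?thesis by (simp add: bij_betw_same_card)
qed

text \<open>Double counting: every preference list of m cars on m + 1 spots leaves exactly one spot empty.\<close>
lemma sum_card_circ_avoiding: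
  "(\<Sum>t\<in>{0..<int m + 1}. card (circ_avoiding k m t)) = (m + 1) ^ m"
proof -
  let ?M = "int m + 1"
  define U where "U = {ps. set ps \<subseteq> {0..<?M} \<and> length ps = m}"
  have "finite U" unfolding U_def by (rule finite_lists_length_eq) simp
  have nat_M: "nat ?M = m + 1" by simp
  have one_empty: "card {t \<in> {0..<?M}. t \<notin> circ_occupied k ?M {} ps} = 1" if "ps \<in> U" for ps
  proof -
    have "circ_occupied k ?M {} ps \<subseteq> {0..<?M}" "card (circ_occupied k ?M {} ps) = m"
      using circ_occupied_card[of ?M "{}" ps k] that nat_M unfolding U_def by auto
    moreover have "{t \<in> {0..<?M}. t \<notin> circ_occupied k ?M {} ps} = {0..<?M} - circ_occupied k ?M {} ps"
      by auto
    ultimately show ?thesis by (simp add: card_Diff_subset finite_subset)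
  qed
  have "(\<Sum>t\<in>{0..<?M}. card (circ_avoiding k m t)) =
      (\<Sum>t\<in>{0..<?M}. card {ps \<in> U. t \<notin> circ_occupied k ?M {} ps})"
    by (intro sum.cong refl arg_cong[where f = card]) (auto simp: circ_avoiding_def U_def)
  also have "\<dots> = 1 * card U"
    by (rule sum_multicount) (use \<open>finite U\<close> one_empty in auto)
  also have "\<dots> = (m + 1) ^ m"
    unfolding U_def using card_lists_length_eq[of "{0..<?M}" m] nat_M by simp
  finally show ?thesis .
qed

lemma card_circ_avoiding_zero: "card (circ_avoiding k m 0) = (m + 1) ^ (m - 1)"
proof -
  have "(m + 1) * (m + 1) ^ (m - 1) = (\<Sum>t\<in>{0..<int m + 1}. card (circ_avoiding k m t))"
    unfolding sum_card_circ_avoiding by (cases m) auto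
  also have "\<dots> = (\<Sum>t\<in>{0..<int m + 1}. card (circ_avoiding k m 0))"
    by (rule sum.cong) (auto intro: card_circ_avoiding_shift)
  also have "\<dots> = (m + 1) * card (circ_avoiding k m 0)"
    by (simp add: nat_add_distrib)
  finally show ?thesis by (metis mult_left_cancel add_is_0 one_neq_zero)
qed

text \<open>The spots e+1, ..., e+m right of an empty spot e are numbered 1, ..., m on a circle of
  m + 1 spots whose spot 0 stands for e; f is the circle seen from the preferred spot a = e + d.
  A car that would reach e in the lot reaches 0 on the circle.\<close>
context
  fixes k e m a :: nat and occ :: "nat set"
  assumes e: "1 \<le> e" and occ: "occ \<subseteq> {e<..e + m}" and a: "e < a" "a \<le> e + m"
  fixes d :: nat and M :: int and circ :: "int set" and f :: "int \<Rightarrow> bool"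
  defines d_def: "d \<equiv> a - e" and M_def: "M \<equiv> int m + 1"
    and circ_def: "circ \<equiv> (\<lambda>s. int (s - e)) ` occ"
    and f_def: "f \<equiv> \<lambda>j. (int d + j) mod M \<in> circ"
begin

lemma gap_view_offset: "1 \<le> d" "d \<le> m" "a = e + d"
  using a unfolding d_def by auto

lemma gap_view_occupied:
  assumes "e < s"
  shows "int (s - e) \<in> circ \<longleftrightarrow> s \<in> occ"
proof
  assume "int (s - e) \<in> circ"
  then obtain s' where "s' \<in> occ" "s - e = s' - e" unfolding circ_def by auto
  moreover have "e < s'" using \<open>s' \<in> occ\<close> occ by auto
  ultimately show "s \<in> occ" using assms by (simp add: eq_diff_iff)
qed (auto simp: circ_def)

lemma gap_view_below: "j < d \<Longrightarrow> f (- int j) \<longleftrightarrow> a - j \<in> occ"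
proof -
  assume "j < d"
  then have "(int d + - int j) mod M = int (a - j - e)" "e < a - j"
    using gap_view_offset unfolding M_def by auto
  then show ?thesis unfolding f_def by (simp only: gap_view_occupied)
qed

lemma gap_view_above: "1 \<le> j \<Longrightarrow> d + j \<le> m \<Longrightarrow> f (int j) \<longleftrightarrow> a + j \<in> occ"
proof -
  assume "1 \<le> j" "d + j \<le> m"
  then have "(int d + int j) mod M = int (a + j - e)" "e < a + j"
    using gap_view_offset unfolding M_def by auto
  then show ?thesis unfolding f_def by (simp only: gap_view_occupied)
qed

lemma gap_view_gap: "\<not> f (- int d)" "\<not> f (int (m + 1 - d))"
proof -
  have "0 \<notin> circ" using occ unfolding circ_def by auto
  moreover have "int d + int (m + 1 - d) = M" using gap_view_offset unfolding M_def by simp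
  ultimately show "\<not> f (- int d)" "\<not> f (int (m + 1 - d))" unfolding f_def by simp_all
qed

lemma park_step_gap_view_backward:
  assumes "f 0" "1 \<le> j0" "j0 \<le> k" "\<not> f (- int j0)" "\<And>j. 1 \<le> j \<Longrightarrow> j < j0 \<Longrightarrow> f (- int j)"
  shows "j0 \<le> d" "park_step k (e + m) occ a = Some (a - j0)"
proof -
  show "j0 \<le> d"
  proof (rule ccontr)
    assume "\<not> j0 \<le> d"
    then show False using assms(5)[of d] gap_view_offset gap_view_gap by simp
  qed
  then have "a - j \<in> occ" if "1 \<le> j" "j < j0" for j
    using gap_view_below[of j] assms(5)[OF that] that by simp
  moreover have "a \<in> occ" using gap_view_below[of 0] assms(1) gap_view_offset by simp
  moreover have "j0 < d \<Longrightarrow> a - j0 \<notin> occ" using gap_view_below[of j0] assms(4) by simp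
  ultimately show "park_step k (e + m) occ a = Some (a - j0)"
    using \<open>j0 \<le> d\<close> assms(2,3) gap_view_offset e occ
    by (intro park_step_back) (auto simp: le_less)
qed

lemma park_step_gap_view_forward:
  assumes "f 0" "\<And>j. 1 \<le> j \<Longrightarrow> j \<le> k \<Longrightarrow> f (- int j)"
  defines "l \<equiv> LEAST j::nat. 1 \<le> j \<and> \<not> f (int j)"
  shows "1 \<le> l" "l \<le> m + 1 - d"
    and "l < m + 1 - d \<Longrightarrow> park_step k (e + m) occ a = Some (a + l)"
    and "l = m + 1 - d \<Longrightarrow> park_step k (e + m) occ a = None"
proof -
  have "1 \<le> m + 1 - d" using gap_view_offset by simp
  note least = Least_unoccupied[of "m + 1 - d" f, OF this gap_view_gap(2), folded l_def]
  show "1 \<le> l" "l \<le> m + 1 - d" using least(1,3) by simp_all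
  have "k < d"
  proof (rule ccontr)
    assume "\<not> k < d"
    then show False using assms(2)[of d] gap_view_offset gap_view_gap by simp
  qed
  then have back_occupied: "a - j \<in> occ" if "1 \<le> j" "j \<le> k" "j < a" for j
    using gap_view_below[of j] assms(2)[OF that(1,2)] that(2) \<open>k < d\<close> by simp
  have "a \<in> occ" using gap_view_below[of 0] assms(1) gap_view_offset by simp
  have forward_occupied: "s \<in> occ" if "a < s" "s < a + l" "s \<le> e + m" for s
    using gap_view_above[of "s - a"] least(4)[of "s - a"] that gap_view_offset by auto
  show "park_step k (e + m) occ a = Some (a + l)" if "l < m + 1 - d"
  proof (rule park_step_forward[OF \<open>a \<in> occ\<close> back_occupied])
    show "a < a + l" "a + l \<le> e + m" using least(1) that gap_view_offset by auto
    show "a + l \<notin> occ" using gap_view_above[of l] least(1,2) that gap_view_offset by simp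
    show "s \<in> occ" if "a < s" "s < a + l" for s
      using forward_occupied that \<open>a + l \<le> e + m\<close> by simp
  qed
  show "park_step k (e + m) occ a = None" if "l = m + 1 - d"
    by (rule park_step_fail[OF \<open>a \<in> occ\<close> back_occupied])
      (use forward_occupied that gap_view_offset in auto)
qed

lemma park_step_gap_view:
  defines "c \<equiv> circ_step k M circ (int d)"
  shows "c \<noteq> 0 \<Longrightarrow> park_step k (e + m) occ a = Some (nat c + e)"
    and "c = 0 \<Longrightarrow> park_step k (e + m) occ a \<in> {None, Some e}"
proof -
  have c: "c = (int d + circ_offset k f) mod M"
    unfolding c_def circ_step_def f_def by simp
  have "(c \<noteq> 0 \<longrightarrow> park_step k (e + m) occ a = Some (nat c + e)) \<and>
      (c = 0 \<longrightarrow> park_step k (e + m) occ a \<in> {None, Some e})"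
  proof (cases rule: circ_offset_cases[of f k])
    case free
    then have "a \<notin> occ" using gap_view_below[of 0] gap_view_offset by simp
    then show ?thesis using c free park_step_free gap_view_offset unfolding M_def by simp
  next
    case (backward j0)
    note step = park_step_gap_view_backward[OF backward(1-5)]
    then show ?thesis
      using c backward(6) gap_view_offset unfolding M_def by (cases "j0 = d") auto
  next
    case forward
    note step = park_step_gap_view_forward[OF forward(1,2)]
    then show ?thesis
      using c forward(3) gap_view_offset unfolding M_def
      by (cases "(LEAST j::nat. 1 \<le> j \<and> \<not> f (int j)) = m + 1 - d") (auto simp: add.commute)
  qed
  then show "c \<noteq> 0 \<Longrightarrow> park_step k (e + m) occ a = Some (nat c + e)"
    and "c = 0 \<Longrightarrow> park_step k (e + m) occ a \<in> {None, Some e}" by blast+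
qed

end

lemma parks_avoiding_iff_circ:
  assumes "1 \<le> e" "occ \<subseteq> {e<..e + m}" "set xs \<subseteq> {e<..e + m}"
  shows "parks_avoiding k (e + m) e occ xs \<longleftrightarrow>
    0 \<notin> circ_occupied k (int m + 1) ((\<lambda>s. int (s - e)) ` occ) (map (\<lambda>s. int (s - e)) xs)"
  using assms(2,3)
proof (induction xs arbitrary: occ)
  case (Cons a xs)
  let ?\<phi> = "\<lambda>s::nat. int (s - e)"
  define c where "c = circ_step k (int m + 1) (?\<phi> ` occ) (?\<phi> a)"
  have a: "e < a" "a \<le> e + m" and xs: "set xs \<subseteq> {e<..e + m}" using Cons.prems by auto
  note step = park_step_gap_view[OF assms(1) Cons.prems(1) a, of k, folded c_def]
  have circ_Cons: "circ_occupied k (int m + 1) (?\<phi> ` occ) (map ?\<phi> (a # xs)) =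
      circ_occupied k (int m + 1) (insert c (?\<phi> ` occ)) (map ?\<phi> xs)"
    unfolding c_def by simp
  show ?case
  proof (cases "c = 0")
    case True
    then have "\<not> parks_avoiding k (e + m) e occ (a # xs)"
      using step(2) by (auto simp: parks_avoiding_Cons)
    moreover have "0 \<in> circ_occupied k (int m + 1) (insert c (?\<phi> ` occ)) (map ?\<phi> xs)"
      using circ_occupied_mono True by blast
    ultimately show ?thesis using circ_Cons by simp
  next
    case False
    define s where "s = nat c + e"
    have "0 \<le> c \<and> c < int m + 1" unfolding c_def by (rule circ_step_range) simp
    then have s: "e < s" "s \<le> e + m" "?\<phi> s = c" using False unfolding s_def by auto
    have "parks_avoiding k (e + m) e occ (a # xs) \<longleftrightarrow> parks_avoiding k (e + m) e (insert s occ) xs"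
      using step(1)[OF False] s unfolding s_def by (auto simp: parks_avoiding_Cons)
    also have "\<dots> \<longleftrightarrow> 0 \<notin> circ_occupied k (int m + 1) (?\<phi> ` insert s occ) (map ?\<phi> xs)"
      by (rule Cons.IH) (use Cons.prems(1) s xs in auto)
    finally show ?thesis using circ_Cons s(3) by simp
  qed
qed force

definition right_avoiding :: "nat \<Rightarrow> nat \<Rightarrow> nat \<Rightarrow> nat list set" where
  "right_avoiding k e n =
    {xs. length xs = n - e \<and> set xs \<subseteq> {e<..n} \<and> parks_avoiding k n e {} xs}"

lemma card_right_avoiding:
  assumes "1 \<le> e" "e \<le> n"
  shows "card (right_avoiding k e n) = (n - e + 1) ^ (n - e - 1)"
proof -
  define m where "m = n - e"
  have n: "n = e + m" using assms unfolding m_def by simp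
  let ?\<phi> = "map (\<lambda>s. int (s - e))" and ?\<psi> = "map (\<lambda>t. nat t + e)"
  have avoid_iff: "parks_avoiding k n e {} xs \<longleftrightarrow> 0 \<notin> circ_occupied k (int m + 1) {} (?\<phi> xs)"
    if "set xs \<subseteq> {e<..n}" for xs
    using parks_avoiding_iff_circ[of e "{}" m xs k] assms(1) that n by simp
  have circ_range: "1 \<le> t \<and> t \<le> int m" if "ps \<in> circ_avoiding k m 0" "t \<in> set ps" for ps t
  proof -
    have "set ps \<subseteq> circ_occupied k (int m + 1) {} ps"
      by (rule preferences_circ_occupied) (use that in \<open>auto simp: circ_avoiding_def\<close>)
    then have "t \<noteq> 0" using that by (auto simp: circ_avoiding_def)
    moreover have "0 \<le> t \<and> t < int m + 1" using that by (auto simp: circ_avoiding_def)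
    ultimately show ?thesis by simp
  qed
  have inverse: "?\<phi> (?\<psi> ps) = ps" if ps: "ps \<in> circ_avoiding k m 0" for ps
  proof -
    have "int (nat t + e - e) = t" if "t \<in> set ps" for t using circ_range[OF ps that] by simp
    then show ?thesis by (simp add: map_idI)
  qed
  have "bij_betw ?\<phi> (right_avoiding k e n) (circ_avoiding k m 0)"
  proof (rule bij_betw_byWitness[where f' = ?\<psi>])
    show "\<forall>xs\<in>right_avoiding k e n. ?\<psi> (?\<phi> xs) = xs"
      by (force simp: right_avoiding_def intro!: map_idI)
    show "\<forall>ps\<in>circ_avoiding k m 0. ?\<phi> (?\<psi> ps) = ps" using inverse by blast
    show "?\<phi> ` right_avoiding k e n \<subseteq> circ_avoiding k m 0"
    proof
      fix ps assume "ps \<in> ?\<phi> ` right_avoiding k e n"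
      then obtain xs where xs: "xs \<in> right_avoiding k e n" and ps: "ps = ?\<phi> xs" by blast
      have "set ps \<subseteq> {0..<int m + 1}" using xs n unfolding ps right_avoiding_def by auto
      moreover have "0 \<notin> circ_occupied k (int m + 1) {} ps"
        using xs avoid_iff[of xs] unfolding ps right_avoiding_def by simp
      ultimately show "ps \<in> circ_avoiding k m 0"
        using xs unfolding ps right_avoiding_def circ_avoiding_def m_def by simp
    qed
    show "?\<psi> ` circ_avoiding k m 0 \<subseteq> right_avoiding k e n"
    proof
      fix xs assume "xs \<in> ?\<psi> ` circ_avoiding k m 0"
      then obtain ps where ps: "ps \<in> circ_avoiding k m 0" and xs: "xs = ?\<psi> ps" by blast
      have "?\<phi> xs = ps" using inverse[OF ps] unfolding xs .
      moreover have "set xs \<subseteq> {e<..n}" using ps circ_range n unfolding xs by force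
      ultimately show "xs \<in> right_avoiding k e n"
        using ps avoid_iff unfolding xs by (auto simp: right_avoiding_def circ_avoiding_def m_def)
    qed
  qed
  then show ?thesis
    using card_circ_avoiding_zero[of k m] by (simp add: bij_betw_same_card m_def)
qed

section \<open>Counting\<close>

lemma occupied_right_of_empty_spot:
  assumes "occupied k n occ xs = Some F" "e \<notin> F" "occ \<subseteq> {e<..n}" "set xs \<subseteq> {e<..n}"
  shows "F \<subseteq> {e<..n}"
  using assms
proof (induction xs arbitrary: occ)
  case (Cons a xs)
  obtain s where s: "park_step k n occ a = Some s"
    and rest: "occupied k n (insert s occ) xs = Some F"
    using Cons.prems(1) by (cases "park_step k n occ a") simp_all
  have a: "e < a" "a \<le> n" using Cons.prems(4) by auto
  have "s \<noteq> e" using occupied_mono[OF rest] Cons.prems(2) by blast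
  moreover have "e \<le> s" by (rule park_step_ge_empty_spot[OF _ a(1) s]) (use Cons.prems(3) in auto)
  moreover have "s \<le> n" using park_step_in_range[OF s] a by simp
  ultimately show ?case using Cons.IH[OF rest Cons.prems(2)] Cons.prems(3,4) by simp
qed simp

lemma length_le_if_occupied:
  assumes "occupied k n {} xs = Some F" "F \<subseteq> A" "finite A"
  shows "length xs \<le> card A"
  using occupied_card[OF _ assms(1)] card_mono[OF assms(3,2)] by simp

lemma filter_shuffles_separated:
  assumes "zs \<in> shuffles xs ys" "\<forall>x\<in>set xs. P x" "\<forall>y\<in>set ys. \<not> P y"
  shows "filter P zs = xs \<and> filter (\<lambda>z. \<not> P z) zs = ys"
proof -
  have "filter P zs \<in> shuffles (filter P xs) (filter P ys)"
    and "filter (\<lambda>z. \<not> P z) zs \<in> shuffles (filter (\<lambda>z. \<not> P z) xs) (filter (\<lambda>z. \<not> P z) ys)"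
    using assms(1) filter_shuffles by blast+
  moreover have "filter P xs = xs" "filter P ys = []"
    and "filter (\<lambda>z. \<not> P z) xs = []" "filter (\<lambda>z. \<not> P z) ys = ys"
    using assms(2,3) by (simp_all add: filter_id_conv filter_empty_conv)
  ultimately show ?thesis by simp
qed

definition avoiding :: "nat \<Rightarrow> nat \<Rightarrow> nat \<Rightarrow> nat list set" where
  "avoiding k n e = {xs. length xs = n \<and> set xs \<subseteq> {1..n + 1} \<and> parks_avoiding k (n + 1) e {} xs}"

lemma avoiding_occupied:
  assumes "xs \<in> avoiding k n e" "e \<in> {1..n + 1}"
  shows "occupied k (n + 1) {} xs = Some ({1..n + 1} - {e})"
proof -
  obtain F where "occupied k (n + 1) {} xs = Some F" "e \<notin> F"
    using assms(1) unfolding avoiding_def parks_avoiding_def by blast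
  moreover have "F = {1..n + 1} - {e}"
    by (rule occupied_all_but_one) (use assms calculation in \<open>auto simp: avoiding_def\<close>)
  ultimately show ?thesis by simp
qed

lemma avoiding_eq_shuffles:
  assumes e: "1 \<le> e" "e \<le> n + 1"
  shows "avoiding k n e = (\<Union>(xs, ys) \<in> PF (e - 1) k \<times> right_avoiding k e (n + 1). shuffles xs ys)"
proof -
  have split: "zs \<in> avoiding k n e \<longleftrightarrow>
      filter (\<lambda>z. z < e) zs \<in> PF (e - 1) k \<and> filter (\<lambda>z. \<not> z < e) zs \<in> right_avoiding k e (n + 1)"
    if "set zs \<subseteq> {1..n + 1} - {e}" "length zs = n" for zs
  proof -
    let ?xs = "filter (\<lambda>z. z < e) zs" and ?ys = "filter (\<lambda>z. \<not> z < e) zs"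
    have xs: "set ?xs \<subseteq> {1..e - 1}" and ys: "set ?ys \<subseteq> {e<..n + 1}" using that by auto
    have len: "length ?xs + length ?ys = n" using that sum_length_filter_compl by blast
    have "zs \<in> avoiding k n e \<longleftrightarrow> occupied k (e - 1) {} ?xs \<noteq> None \<and> parks_avoiding k (n + 1) e {} ?ys"
      using parks_avoiding_split[of "{}" e "{}" zs "n + 1" k] that e by (auto simp: avoiding_def)
    moreover have "length ?xs \<le> e - 1" if "occupied k (e - 1) {} ?xs = Some F" for F
      using length_le_if_occupied[OF that occupied_range[OF that xs]] by simp
    moreover have "length ?ys \<le> n + 1 - e" if avoid: "parks_avoiding k (n + 1) e {} ?ys"
    proof -
      obtain F where F: "occupied k (n + 1) {} ?ys = Some F" "e \<notin> F"
        using avoid unfolding parks_avoiding_def by blast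
      show ?thesis
        using length_le_if_occupied[OF F(1) occupied_right_of_empty_spot[OF F _ ys]] by simp
    qed
    moreover have "?xs \<in> PF (e - 1) k \<longleftrightarrow> occupied k (e - 1) {} ?xs \<noteq> None \<and> length ?xs = e - 1"
      using xs by (auto simp: PF_def parks_iff_occupied)
    moreover have "?ys \<in> right_avoiding k e (n + 1) \<longleftrightarrow>
        parks_avoiding k (n + 1) e {} ?ys \<and> length ?ys = n + 1 - e"
      using ys by (auto simp: right_avoiding_def)
    ultimately show ?thesis using len e by auto
  qed
  show ?thesis
  proof (intro set_eqI iffI)
    fix zs assume zs: "zs \<in> avoiding k n e"
    then obtain F where "occupied k (n + 1) {} zs = Some F" "e \<notin> F"
      unfolding avoiding_def parks_avoiding_def by blast
    then have "e \<notin> set zs" using preferences_occupied by blast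
    then have "set zs \<subseteq> {1..n + 1} - {e}" "length zs = n" using zs by (auto simp: avoiding_def)
    then show "zs \<in> (\<Union>(xs, ys) \<in> PF (e - 1) k \<times> right_avoiding k e (n + 1). shuffles xs ys)"
      using split zs partition_in_shuffles[of zs "\<lambda>z. z < e"] by blast
  next
    fix zs assume "zs \<in> (\<Union>(xs, ys) \<in> PF (e - 1) k \<times> right_avoiding k e (n + 1). shuffles xs ys)"
    then obtain xs ys where xs: "xs \<in> PF (e - 1) k" and ys: "ys \<in> right_avoiding k e (n + 1)"
      and zs: "zs \<in> shuffles xs ys" by blast
    have sets: "set xs \<subseteq> {1..e - 1}" "set ys \<subseteq> {e<..n + 1}" and "length xs + length ys = n"
      using xs ys e by (auto simp: PF_def right_avoiding_def)
    moreover have "{1..e - 1} \<union> {e<..n + 1} \<subseteq> {1..n + 1} - {e}" using e by auto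
    ultimately have "set zs \<subseteq> {1..n + 1} - {e}" "length zs = n"
      using set_shuffles[OF zs] length_shuffles[OF zs] by auto
    moreover have "\<forall>x\<in>set xs. x < e" "\<forall>y\<in>set ys. \<not> y < e" using sets e by force+
    note filter_shuffles_separated[OF zs this]
    ultimately show "zs \<in> avoiding k n e" using split xs ys by simp
  qed
qed

lemma finite_PF: "finite (PF n k)"
  by (rule finite_subset[OF _ finite_lists_length_eq[of "{1..n}" n]]) (auto simp: PF_def)

lemma finite_right_avoiding: "finite (right_avoiding k e n)"
  by (rule finite_subset[OF _ finite_lists_length_eq[of "{e<..n}" "n - e"]])
    (auto simp: right_avoiding_def)

lemma card_avoiding:
  assumes e: "1 \<le> e" "e \<le> n + 1"
  shows "card (avoiding k n e) = (n choose (e - 1)) * card (PF (e - 1) k) * card (right_avoiding k e (n + 1))"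
proof -
  let ?I = "PF (e - 1) k \<times> right_avoiding k e (n + 1)"
  have sep: "\<forall>x\<in>set xs. x < e" "\<forall>y\<in>set ys. \<not> y < e" if "(xs, ys) \<in> ?I" for xs ys
    using that by (force simp: PF_def right_avoiding_def)+
  have disjoint: "shuffles xs ys \<inter> shuffles xs' ys' = {}"
    if "(xs, ys) \<in> ?I" "(xs', ys') \<in> ?I" "(xs, ys) \<noteq> (xs', ys')" for xs ys xs' ys'
    using filter_shuffles_separated[OF _ sep(1,2)[OF that(1)]]
      filter_shuffles_separated[OF _ sep(1,2)[OF that(2)]] that(3) by blast
  have count: "card (shuffles xs ys) = n choose (e - 1)" if "(xs, ys) \<in> ?I" for xs ys
  proof -
    have "set xs \<inter> set ys = {}" using sep[OF that] by auto
    moreover have "length xs = e - 1" "length ys = n + 1 - e"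
      using that by (auto simp: PF_def right_avoiding_def)
    ultimately show ?thesis using card_disjoint_shuffles[of xs ys] e by simp
  qed
  have "card (avoiding k n e) = (\<Sum>p\<in>?I. card ((\<lambda>(xs, ys). shuffles xs ys) p))"
    unfolding avoiding_eq_shuffles[OF e]
    by (rule card_UN_disjoint) (auto simp: finite_PF finite_right_avoiding disjoint)
  also have "\<dots> = (\<Sum>p\<in>?I. n choose (e - 1))"
    by (rule sum.cong) (auto simp: count)
  finally show ?thesis by (simp add: card_cartesian_product)
qed

text \<open>Before the last car arrives exactly one spot e is empty; the last car parks if and only
  if its preference is at most e + k.\<close>
lemma PF_Suc_eq:
  "PF (n + 1) k =
    (\<Union>e\<in>{1..n + 1}. (\<lambda>(xs, p). xs @ [p]) ` (avoiding k n e \<times> {1..min (e + k) (n + 1)}))"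
proof (intro set_eqI iffI)
  fix zs assume "zs \<in> PF (n + 1) k"
  then have len: "length zs = n + 1" and zs: "set zs \<subseteq> {1..n + 1}"
    and parks: "occupied k (n + 1) {} zs \<noteq> None"
    unfolding PF_def parks_iff_occupied by auto
  obtain xs p where zs_eq: "zs = xs @ [p]" using len by (cases zs rule: rev_cases) auto
  then have xs: "set xs \<subseteq> {1..n + 1}" "length xs = n" and p: "p \<in> {1..n + 1}"
    using zs len by auto
  obtain F where F: "occupied k (n + 1) {} xs = Some F"
    and last: "park_step k (n + 1) F p \<noteq> None"
    using parks unfolding zs_eq occupied_snoc by (auto split: option.splits)
  have "finite F" "card F = n" using occupied_card[OF _ F] xs by simp_all
  then have "\<not> {1..n + 1} \<subseteq> F" using card_mono[of F "{1..n + 1}"] by auto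
  then obtain e where e: "e \<in> {1..n + 1}" "e \<notin> F" by blast
  have "F = {1..n + 1} - {e}" by (rule occupied_all_but_one) (use F xs e in simp_all)
  then have "p \<le> e + k" using last park_step_one_empty_spot[OF e(1) p] by simp
  moreover have "xs \<in> avoiding k n e"
    using F xs e unfolding avoiding_def parks_avoiding_def by auto
  ultimately have "zs \<in> (\<lambda>(xs, p). xs @ [p]) ` (avoiding k n e \<times> {1..min (e + k) (n + 1)})"
    unfolding zs_eq using p by (intro image_eqI[of _ _ "(xs, p)"]) auto
  then show "zs \<in> (\<Union>e\<in>{1..n + 1}. (\<lambda>(xs, p). xs @ [p]) ` (avoiding k n e \<times> {1..min (e + k) (n + 1)}))"
    using e(1) by blast
next
  fix zs assume "zs \<in> (\<Union>e\<in>{1..n + 1}. (\<lambda>(xs, p). xs @ [p]) ` (avoiding k n e \<times> {1..min (e + k) (n + 1)}))"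
  then obtain e xs p where e: "e \<in> {1..n + 1}" and xs: "xs \<in> avoiding k n e"
    and p: "p \<in> {1..n + 1}" "p \<le> e + k" and zs: "zs = xs @ [p]" by auto
  have "park_step k (n + 1) ({1..n + 1} - {e}) p \<noteq> None"
    using park_step_one_empty_spot[OF e p(1)] p(2) by simp
  then have "occupied k (n + 1) {} zs \<noteq> None"
    unfolding zs occupied_snoc avoiding_occupied[OF xs e] by auto
  then show "zs \<in> PF (n + 1) k"
    using xs p unfolding zs PF_def avoiding_def parks_iff_occupied by auto
qed

lemma card_PF_Suc:
  "card (PF (n + 1) k) = (\<Sum>e\<in>{1..n + 1}. card (avoiding k n e) * min (e + k) (n + 1))"
proof -
  let ?snoc = "\<lambda>(xs :: nat list, p :: nat). xs @ [p]"
  let ?A = "\<lambda>e. ?snoc ` (avoiding k n e \<times> {1..min (e + k) (n + 1)})"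
  have inj: "inj_on ?snoc X" for X by (rule inj_onI) auto
  have finite: "finite (avoiding k n e)" for e
    by (rule finite_subset[OF _ finite_lists_length_eq[of "{1..n + 1}" n]]) (auto simp: avoiding_def)
  have "?A e \<inter> ?A e' = {}" if "e \<in> {1..n + 1}" "e' \<in> {1..n + 1}" "e \<noteq> e'" for e e'
    using avoiding_occupied[OF _ that(1)] avoiding_occupied[OF _ that(2)] that by fastforce
  then have "card (PF (n + 1) k) = (\<Sum>e\<in>{1..n + 1}. card (?A e))"
    unfolding PF_Suc_eq by (intro card_UN_disjoint) (auto simp: finite)
  also have "\<dots> = (\<Sum>e\<in>{1..n + 1}. card (avoiding k n e) * min (e + k) (n + 1))"
    by (intro sum.cong refl) (simp add: card_image[OF inj] card_cartesian_product)
  finally show ?thesis .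
qed

theorem theorem1p1:
  fixes n k :: nat
  assumes "1 \<le> n" and "k \<le> n - 1"
  shows "card (PF (n + 1) k) =
    (\<Sum>i = 0..n. (n choose i) * min ((i + 1) + k) (n + 1) * card (PF i k) * (n - i + 1) ^ (n - i - 1))"
proof -
  have "card (PF (n + 1) k) = (\<Sum>i = 0..n. card (avoiding k n (i + 1)) * min (i + 1 + k) (n + 1))"
    unfolding card_PF_Suc
    using sum.shift_bounds_cl_Suc_ivl[of "\<lambda>e. card (avoiding k n e) * min (e + k) (n + 1)" 0 n]
    by simp
  also have "\<dots> = (\<Sum>i = 0..n. (n choose i) * min ((i + 1) + k) (n + 1) * card (PF i k) * (n - i + 1) ^ (n - i - 1))"
    by (intro sum.cong refl) (simp add: card_avoiding card_right_avoiding Suc_diff_le algebra_simps)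
  finally show ?thesis .
qed

end
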